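(* Let $(H,\Lambda)$ be a signified graph on exactly $9$ vertices such that every signified graph whose underlying graph is outerplanar admits a signified homomorphism to $(H,\Lambda)$. Then $(H,\Lambda)$ is isomorphic (by a sign-preserving isomorphism) to $SP_9$.
   Context: A signified graph $(G,\Sigma)$ is a simple graph $G$ with a set $\Sigma\subseteq E(G)$ of negative edges, other edges positive. A signified homomorphism of $(G,\Sigma)$ to $(H,\Lambda)$ is a map $V(G)\to V(H)$ sending every edge to an edge of the same sign. $SP_9$ is the complete graph on vertex set $\mathbb{F}_9$ where the edge $xy$ is negative iff $y-x$ is a non-square in $\mathbb{F}_9$. *)

theory Defs
  imports Main
begin

text \<open>A signified graph: finite vertex set V, symmetric irreflexive edge relation E on V,
  and a set of negative edges N (symmetric, N \<subseteq> E). Edges in E but not N are positive.\<close>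

definition signified_graph :: "'a set \<Rightarrow> ('a \<Rightarrow> 'a \<Rightarrow> bool) \<Rightarrow> ('a \<Rightarrow> 'a \<Rightarrow> bool) \<Rightarrow> bool" where
  "signified_graph V E N \<longleftrightarrow> finite V
     \<and> (\<forall>x y. E x y \<longrightarrow> x \<in> V \<and> y \<in> V)
     \<and> (\<forall>x. \<not> E x x)
     \<and> (\<forall>x y. E x y \<longrightarrow> E y x)
     \<and> (\<forall>x y. N x y \<longrightarrow> E x y)
     \<and> (\<forall>x y. N x y \<longrightarrow> N y x)"

text \<open>Outerplanarity: the vertices can be placed in convex position (on a circle, in the
  cyclic order given by a bijection to {0..<card V}) such that the edges, drawn as straight
  chords, pairwise do not cross.\<close>

definition outerplanar :: "'a set \<Rightarrow> ('a \<Rightarrow> 'a \<Rightarrow> bool) \<Rightarrow> bool" where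
  "outerplanar V E \<longleftrightarrow> (\<exists>p. bij_betw p V {0..<card V} \<and>
     (\<forall>a b c d. a \<in> V \<and> b \<in> V \<and> c \<in> V \<and> d \<in> V \<and> E a b \<and> E c d \<longrightarrow>
        \<not> (p a < p c \<and> p c < p b \<and> p b < p d)))"

definition signified_hom ::
  "'a set \<Rightarrow> ('a \<Rightarrow> 'a \<Rightarrow> bool) \<Rightarrow> ('a \<Rightarrow> 'a \<Rightarrow> bool) \<Rightarrow>
   'b set \<Rightarrow> ('b \<Rightarrow> 'b \<Rightarrow> bool) \<Rightarrow> ('b \<Rightarrow> 'b \<Rightarrow> bool) \<Rightarrow> ('a \<Rightarrow> 'b) \<Rightarrow> bool" where
  "signified_hom V E N V' E' N' g \<longleftrightarrow>
     (\<forall>x\<in>V. g x \<in> V') \<and>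
     (\<forall>x y. E x y \<longrightarrow> E' (g x) (g y) \<and> (N' (g x) (g y) \<longleftrightarrow> N x y))"

definition signified_iso ::
  "'a set \<Rightarrow> ('a \<Rightarrow> 'a \<Rightarrow> bool) \<Rightarrow> ('a \<Rightarrow> 'a \<Rightarrow> bool) \<Rightarrow>
   'b set \<Rightarrow> ('b \<Rightarrow> 'b \<Rightarrow> bool) \<Rightarrow> ('b \<Rightarrow> 'b \<Rightarrow> bool) \<Rightarrow> ('a \<Rightarrow> 'b) \<Rightarrow> bool" where
  "signified_iso V E N V' E' N' f \<longleftrightarrow> bij_betw f V V' \<and>
     (\<forall>x\<in>V. \<forall>y\<in>V. (E' (f x) (f y) \<longleftrightarrow> E x y) \<and> (N' (f x) (f y) \<longleftrightarrow> N x y))"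

text \<open>The field F_9 = F_3[i]/(i^2+1), elements (a,b) \<leftrightarrow> a + b i with a,b \<in> {0,1,2}.\<close>

definition F9 :: "(int \<times> int) set" where
  "F9 = {0..2} \<times> {0..2}"

definition f9_sub :: "int \<times> int \<Rightarrow> int \<times> int \<Rightarrow> int \<times> int" where
  "f9_sub x y = ((fst x - fst y) mod 3, (snd x - snd y) mod 3)"

definition f9_mul :: "int \<times> int \<Rightarrow> int \<times> int \<Rightarrow> int \<times> int" where
  "f9_mul x y = ((fst x * fst y - snd x * snd y) mod 3, (fst x * snd y + snd x * fst y) mod 3)"

definition f9_nonsquare :: "int \<times> int \<Rightarrow> bool" where
  "f9_nonsquare z \<longleftrightarrow> z \<in> F9 \<and> (\<forall>w\<in>F9. f9_mul w w \<noteq> z)"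

definition SP9_E :: "int \<times> int \<Rightarrow> int \<times> int \<Rightarrow> bool" where
  "SP9_E x y \<longleftrightarrow> x \<in> F9 \<and> y \<in> F9 \<and> x \<noteq> y"

definition SP9_N :: "int \<times> int \<Rightarrow> int \<times> int \<Rightarrow> bool" where
  "SP9_N x y \<longleftrightarrow> SP9_E x y \<and> f9_nonsquare (f9_sub y x)"

end

(*
  Every fan tree is outerplanar, so it maps to (H, Lambda). In a fan tree each vertex has, next to
  its parent, a path of seven positive children and a path of seven negative children along which
  the signs alternate. The sets of images of the root under homomorphisms of fan trees of depth k
  decrease with k, hence stabilise at a nonempty set A in which every vertex has two such
  alternating fans. An alternating walk of length 4 has at least 4 distinct vertices, so every
  vertex of A has at least 4 positive and 4 negative neighbours; as H has 9 vertices, A is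
  everything, H is complete and each vertex has exactly 4 neighbours of each sign. The fans then
  also give every positive (negative) neighbour of x a positive (negative) neighbour among the
  positive (negative) neighbours of x. A double count shows that each positive edge lies in
  exactly one positive triangle, and this forces the positive graph to be the 3 x 3 rook's graph,
  which is the positive graph of SP9: for x \<noteq> y, x - y is a square in F9 iff x and y agree in
  a coordinate.
*)
theory Submission
  imports Defs "HOL-Library.Countable" "HOL-Library.List_Lexorder"
begin

section \<open>Universality for countable vertex types\<close>

definition outerplanar_universal :: "'b set \<Rightarrow> ('b \<Rightarrow> 'b \<Rightarrow> bool) \<Rightarrow> ('b \<Rightarrow> 'b \<Rightarrow> bool) \<Rightarrow> bool" where
  "outerplanar_universal VH EH NH \<longleftrightarrow>
     (\<forall>(V::nat set) E N. signified_graph V E N \<and> outerplanar V E \<longrightarrow>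
        (\<exists>g. signified_hom V E N VH EH NH g))"

lemma outerplanar_universalD:
  fixes V :: "'a::countable set"
  assumes univ: "outerplanar_universal VH EH NH"
    and sg: "signified_graph V E N" and op: "outerplanar V E"
  shows "\<exists>g. signified_hom V E N VH EH NH g"
proof -
  define V' where "V' = to_nat ` V"
  define E' where "E' = (\<lambda>x y. x \<in> V' \<and> y \<in> V' \<and> E (from_nat x) (from_nat y))"
  define N' where "N' = (\<lambda>x y. x \<in> V' \<and> y \<in> V' \<and> N (from_nat x) (from_nat y))"
  have sg': "signified_graph V' E' N'"
    using sg unfolding signified_graph_def E'_def N'_def V'_def by (auto simp: image_iff)
  obtain p where p: "bij_betw p V {0..<card V}"
    and noncross: "\<forall>a b c d. a \<in> V \<and> b \<in> V \<and> c \<in> V \<and> d \<in> V \<and> E a b \<and> E c d \<longrightarrow>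
                      \<not> (p a < p c \<and> p c < p b \<and> p b < p d)"
    using op unfolding outerplanar_def by blast
  have from_nat: "bij_betw from_nat V' V"
    unfolding V'_def by (rule bij_betw_imageI) (auto simp: inj_on_def image_image)
  have "card V' = card V"
    unfolding V'_def by (simp add: card_image)
  then have "bij_betw (p \<circ> from_nat) V' {0..<card V'}"
    using bij_betw_trans[OF from_nat p] by simp
  moreover have "\<forall>a b c d. a \<in> V' \<and> b \<in> V' \<and> c \<in> V' \<and> d \<in> V' \<and> E' a b \<and> E' c d \<longrightarrow>
      \<not> ((p \<circ> from_nat) a < (p \<circ> from_nat) c \<and> (p \<circ> from_nat) c < (p \<circ> from_nat) b
         \<and> (p \<circ> from_nat) b < (p \<circ> from_nat) d)"
    using noncross unfolding E'_def V'_def by auto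
  ultimately have "outerplanar V' E'"
    unfolding outerplanar_def by blast
  then obtain g where "signified_hom V' E' N' VH EH NH g"
    using univ sg' unfolding outerplanar_universal_def by blast
  then have "signified_hom V E N VH EH NH (g \<circ> to_nat)"
    using sg unfolding signified_hom_def signified_graph_def E'_def N'_def V'_def by auto
  then show ?thesis by blast
qed

section \<open>Outerplanarity from a noncrossing linear order\<close>

lemma card_lower_set_less:
  fixes V :: "'a::linorder set"
  assumes "finite V" "u \<in> V" "u < w"
  shows "card {x\<in>V. x < u} < card {x\<in>V. x < w}"
proof (rule psubset_card_mono)
  show "finite {x\<in>V. x < w}" using assms(1) by simp
  have "{x\<in>V. x < u} \<subseteq> {x\<in>V. x < w}" using assms(3) by auto
  moreover have "u \<in> {x\<in>V. x < w} - {x\<in>V. x < u}" using assms(2,3) by simp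
  ultimately show "{x\<in>V. x < u} \<subset> {x\<in>V. x < w}" by blast
qed

lemma card_lower_set_less_iff:
  fixes V :: "'a::linorder set"
  assumes "finite V" "u \<in> V" "w \<in> V"
  shows "card {x\<in>V. x < u} < card {x\<in>V. x < w} \<longleftrightarrow> u < w"
  using card_lower_set_less[OF assms(1,2), of w] card_lower_set_less[OF assms(1,3), of u]
  by (cases u w rule: linorder_cases) auto

lemma bij_betw_card_lower_set:
  fixes V :: "'a::linorder set"
  assumes "finite V"
  shows "bij_betw (\<lambda>w. card {x\<in>V. x < w}) V {0..<card V}"
proof -
  let ?r = "\<lambda>w. card {x\<in>V. x < w}"
  have inj: "inj_on ?r V"
  proof (rule inj_onI)
    fix u w assume "u \<in> V" "w \<in> V" "?r u = ?r w"
    then show "u = w"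
      using card_lower_set_less_iff[OF assms, of u w] card_lower_set_less_iff[OF assms, of w u]
      by (cases u w rule: linorder_cases) auto
  qed
  have "?r w < card V" if "w \<in> V" for w
    by (rule psubset_card_mono) (use assms that in auto)
  then have "?r ` V \<subseteq> {0..<card V}" by auto
  moreover have "card (?r ` V) = card {0..<card V}"
    using inj by (simp add: card_image)
  ultimately have "?r ` V = {0..<card V}"
    by (simp add: card_subset_eq)
  then show ?thesis using inj by (simp add: bij_betw_def)
qed

lemma outerplanar_if_noncrossing_order:
  fixes V :: "'a::linorder set"
  assumes "finite V"
    and noncross: "\<And>a b c d. \<lbrakk>E a b; E c d; a < c; c < b; b < d\<rbrakk> \<Longrightarrow> False"
  shows "outerplanar V E"
proof -
  let ?r = "\<lambda>w. card {x\<in>V. x < w}"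
  have "\<not> (?r a < ?r c \<and> ?r c < ?r b \<and> ?r b < ?r d)"
    if "a \<in> V" "b \<in> V" "c \<in> V" "d \<in> V" "E a b" "E c d" for a b c d
    using noncross[OF that(5,6)] card_lower_set_less_iff[OF assms(1) that(1) that(3)]
      card_lower_set_less_iff[OF assms(1) that(3) that(2)] card_lower_set_less_iff[OF assms(1) that(2) that(4)]
    by blast
  with bij_betw_card_lower_set[OF assms(1)] show ?thesis
    unfolding outerplanar_def by (intro exI[of _ ?r]) blast
qed

section \<open>Fan trees\<close>

lemma append_less_append_iff: "p @ u < p @ v \<longleftrightarrow> u < (v :: 'a::linorder list)"
  by (induction p) auto

lemma less_append_Cons: "p < p @ x # r"
  for p :: "'a::linorder list"
  by (induction p) auto

lemma between_append_singleton:
  "a < c \<Longrightarrow> c < a @ [i] \<Longrightarrow> \<exists>j r. j < i \<and> c = a @ j # r"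
  for a c :: "'a::linorder list"
proof (induction a arbitrary: c)
  case Nil
  then show ?case by (cases c) auto
next
  case (Cons x a)
  then obtain c' where "c = x # c'" by (cases c) auto
  with Cons show ?case by auto
qed

lemma between_append_Suc:
  "p @ [i] < c \<Longrightarrow> c < p @ [Suc i] \<Longrightarrow> \<exists>x r. c = p @ i # x # r"
proof (induction p arbitrary: c)
  case Nil
  then obtain r where "c = i # r" by (cases c) auto
  with Nil show ?case by (cases r) auto
next
  case (Cons x a)
  then obtain c' where "c = x # c'" by (cases c) auto
  with Cons show ?case by auto
qed

lemma snoc_eq_append_Cons:
  "q @ [m] = a @ j # r \<Longrightarrow> (r = [] \<and> q = a \<and> m = j) \<or> (\<exists>r'. r = r' @ [m] \<and> q = a @ j # r')"
  by (cases r rule: rev_exhaust) auto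

text \<open>The fan tree of depth \<open>k\<close>: below every word \<open>w\<close> of length \<open>< k\<close> over \<open>{..<14}\<close> hang the
  children \<open>w @ [i]\<close> (spokes), consecutive children being joined by rim edges. A spoke to child
  \<open>i\<close> is negative iff \<open>7 \<le> i\<close>, the rim edge from child \<open>i\<close> to child \<open>i + 1\<close> iff \<open>i\<close> is odd; so
  every vertex sees an alternating path on 7 positive and one on 7 negative children.\<close>

definition fan_vertices :: "nat \<Rightarrow> nat list set" where
  "fan_vertices k = {w. set w \<subseteq> {..<14} \<and> length w \<le> k}"

definition fan_arc :: "nat list \<Rightarrow> nat list \<Rightarrow> bool" where
  "fan_arc v w \<longleftrightarrow> (\<exists>i<14. w = v @ [i]) \<or> (\<exists>p i. Suc i < 14 \<and> v = p @ [i] \<and> w = p @ [Suc i])"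

definition fan_negative :: "nat list \<Rightarrow> nat list \<Rightarrow> bool" where
  "fan_negative v w \<longleftrightarrow>
     (if length v = length w then odd (min (last v) (last w))
      else 7 \<le> last (if length v < length w then w else v))"

definition fan_E :: "nat \<Rightarrow> nat list \<Rightarrow> nat list \<Rightarrow> bool" where
  "fan_E k v w \<longleftrightarrow> v \<in> fan_vertices k \<and> w \<in> fan_vertices k \<and> (fan_arc v w \<or> fan_arc w v)"

definition fan_N :: "nat \<Rightarrow> nat list \<Rightarrow> nat list \<Rightarrow> bool" where
  "fan_N k v w \<longleftrightarrow> fan_E k v w \<and> fan_negative v w"

lemma finite_fan_vertices: "finite (fan_vertices k)"
  unfolding fan_vertices_def using finite_lists_length_le[of "{..<14::nat}" k] by simp

lemma fan_arc_less: "fan_arc v w \<Longrightarrow> v < w"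
  unfolding fan_arc_def by (auto simp: less_append_Cons append_less_append_iff)

lemma fan_negative_commute: "fan_negative v w = fan_negative w v"
  unfolding fan_negative_def by (auto simp: min.commute)

lemma signified_graph_fan: "signified_graph (fan_vertices k) (fan_E k) (fan_N k)"
  unfolding signified_graph_def
proof (intro conjI allI impI)
  show "finite (fan_vertices k)" by (rule finite_fan_vertices)
  fix x y
  show "fan_E k x y \<Longrightarrow> x \<in> fan_vertices k" "fan_E k x y \<Longrightarrow> y \<in> fan_vertices k"
    "fan_E k x y \<Longrightarrow> fan_E k y x" "fan_N k x y \<Longrightarrow> fan_E k x y"
    by (auto simp: fan_E_def fan_N_def)
  show "fan_N k x y \<Longrightarrow> fan_N k y x"
    by (auto simp: fan_N_def fan_E_def fan_negative_commute)
  show "\<not> fan_E k x x"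
    using fan_arc_less[of x x] unfolding fan_E_def by blast
qed

lemma fan_arcs_noncrossing:
  assumes "fan_arc a b" "fan_arc c d" "a < c" "c < b"
  shows "d \<le> b"
  using assms(1) unfolding fan_arc_def
proof (elim disjE exE conjE)
  fix i assume i: "i < 14" "b = a @ [i]"
  obtain j r where jr: "j < i" "c = a @ j # r"
    using between_append_singleton assms(3,4) i by blast
  show "d \<le> b" using assms(2) unfolding fan_arc_def
  proof (elim disjE exE conjE)
    fix k assume "d = c @ [k]"
    then show ?thesis using jr i by (auto simp: list_le_def append_less_append_iff)
  next
    fix q m assume qm: "c = q @ [m]" "d = q @ [Suc m]"
    then have "q @ [m] = a @ j # r" using jr by simp
    from snoc_eq_append_Cons[OF this] show ?thesis
      using qm i jr by (auto simp: list_le_def append_less_append_iff)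
  qed
next
  fix p i assume pi: "Suc i < 14" "a = p @ [i]" "b = p @ [Suc i]"
  obtain x r where xr: "c = p @ i # x # r"
    using between_append_Suc assms(3,4) pi by blast
  show "d \<le> b" using assms(2) unfolding fan_arc_def
  proof (elim disjE exE conjE)
    fix k assume "d = c @ [k]"
    then show ?thesis using xr pi by (auto simp: list_le_def append_less_append_iff)
  next
    fix q m assume qm: "c = q @ [m]" "d = q @ [Suc m]"
    then have "q @ [m] = (p @ [i]) @ x # r" using xr by simp
    from snoc_eq_append_Cons[OF this] show ?thesis
      using qm pi by (auto simp: list_le_def append_less_append_iff)
  qed
qed

lemma outerplanar_fan: "outerplanar (fan_vertices k) (fan_E k)"
proof (rule outerplanar_if_noncrossing_order[OF finite_fan_vertices])
  fix a b c d assume ab: "fan_E k a b" and cd: "fan_E k c d" and order: "a < c" "c < b" "b < d"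
  have "\<not> fan_arc b a" "\<not> fan_arc d c"
    using fan_arc_less less_trans[OF order(1,2)] less_trans[OF order(2,3)] less_asym by blast+
  then have "fan_arc a b" "fan_arc c d"
    using ab cd unfolding fan_E_def by blast+
  then have "d \<le> b" using fan_arcs_noncrossing order(1,2) by blast
  with order(3) show False by simp
qed

lemma fan_arc_append:
  assumes "fan_arc v w"
  shows "fan_arc (u @ v) (u @ w)"
  using assms unfolding fan_arc_def
proof (elim disjE exE conjE)
  fix i assume "i < 14" "w = v @ [i]"
  then show "(\<exists>i<14. u @ w = (u @ v) @ [i]) \<or>
    (\<exists>p i. Suc i < 14 \<and> u @ v = p @ [i] \<and> u @ w = p @ [Suc i])" by auto
next
  fix p i assume "Suc i < 14" "v = p @ [i]" "w = p @ [Suc i]"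
  then show "(\<exists>i<14. u @ w = (u @ v) @ [i]) \<or>
    (\<exists>p i. Suc i < 14 \<and> u @ v = p @ [i] \<and> u @ w = p @ [Suc i])"
    by (intro disjI2 exI[of _ "u @ p"] exI[of _ i]) simp
qed

lemma fan_negative_append:
  assumes "fan_arc v w"
  shows "fan_negative (u @ v) (u @ w) = fan_negative v w"
  using assms unfolding fan_arc_def fan_negative_def by (elim disjE exE conjE) simp_all

section \<open>Alternating walks and images of the root\<close>

definition alternating_walk :: "('a \<Rightarrow> 'a \<Rightarrow> bool) \<Rightarrow> ('a \<Rightarrow> 'a \<Rightarrow> bool) \<Rightarrow> (nat \<Rightarrow> 'a) \<Rightarrow> nat \<Rightarrow> bool" where
  "alternating_walk E N w n \<longleftrightarrow>
     (\<forall>i<n. E (w i) (w (Suc i))) \<and>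
     (\<forall>i. Suc i < n \<longrightarrow> N (w i) (w (Suc i)) \<noteq> N (w (Suc i)) (w (Suc (Suc i))))"

lemma alternating_walk_shift:
  assumes "alternating_walk E N w (m + n)"
  shows "alternating_walk E N (\<lambda>i. w (m + i)) n"
  unfolding alternating_walk_def
proof (intro conjI allI impI)
  fix i
  show "E (w (m + i)) (w (m + Suc i))" if "i < n"
    using assms that unfolding alternating_walk_def by (auto dest: spec[of _ "m + i"])
  show "N (w (m + i)) (w (m + Suc i)) \<noteq> N (w (m + Suc i)) (w (m + Suc (Suc i)))" if "Suc i < n"
    using assms that unfolding alternating_walk_def by (auto dest: spec[of _ "m + i"])
qed

lemma alternating_walk_mono:
  "alternating_walk E N w n \<Longrightarrow> m \<le> n \<Longrightarrow> alternating_walk E N w m"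
  unfolding alternating_walk_def by auto

definition alternating_fans :: "('a \<Rightarrow> 'a \<Rightarrow> bool) \<Rightarrow> ('a \<Rightarrow> 'a \<Rightarrow> bool) \<Rightarrow> 'a set \<Rightarrow> 'a \<Rightarrow> bool" where
  "alternating_fans E N A x \<longleftrightarrow> (\<exists>u v. alternating_walk E N u 6 \<and> alternating_walk E N v 6 \<and>
     (\<forall>i\<le>6. u i \<in> A \<and> E x (u i) \<and> \<not> N x (u i) \<and> v i \<in> A \<and> N x (v i)))"

definition root_images :: "'b set \<Rightarrow> ('b \<Rightarrow> 'b \<Rightarrow> bool) \<Rightarrow> ('b \<Rightarrow> 'b \<Rightarrow> bool) \<Rightarrow> nat \<Rightarrow> 'b set" where
  "root_images VH EH NH k = {g [] | g. signified_hom (fan_vertices k) (fan_E k) (fan_N k) VH EH NH g}"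

lemma root_images_subset: "root_images VH EH NH k \<subseteq> VH"
proof -
  have "[] \<in> fan_vertices k" unfolding fan_vertices_def by simp
  then show ?thesis unfolding root_images_def signified_hom_def by blast
qed

lemma root_images_nonempty:
  assumes "outerplanar_universal VH EH NH"
  shows "root_images VH EH NH k \<noteq> {}"
proof -
  obtain g where "signified_hom (fan_vertices k) (fan_E k) (fan_N k) VH EH NH g"
    using outerplanar_universalD[OF assms signified_graph_fan outerplanar_fan] by blast
  then show ?thesis unfolding root_images_def by blast
qed

lemma root_images_Suc_subset: "root_images VH EH NH (Suc k) \<subseteq> root_images VH EH NH k"
proof -
  have sub: "fan_vertices k \<subseteq> fan_vertices (Suc k)"
    unfolding fan_vertices_def by auto
  have "signified_hom (fan_vertices k) (fan_E k) (fan_N k) VH EH NH g"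
    if hom: "signified_hom (fan_vertices (Suc k)) (fan_E (Suc k)) (fan_N (Suc k)) VH EH NH g" for g
    unfolding signified_hom_def
  proof (intro conjI ballI allI impI)
    fix v w assume "fan_E k v w"
    then have "fan_E (Suc k) v w" "fan_N k v w \<longleftrightarrow> fan_N (Suc k) v w"
      using sub unfolding fan_N_def fan_E_def by auto
    then show "EH (g v) (g w)" "NH (g v) (g w) \<longleftrightarrow> fan_N k v w"
      using hom unfolding signified_hom_def by auto
  qed (use hom sub in \<open>auto simp: signified_hom_def\<close>)
  then show ?thesis unfolding root_images_def by blast
qed

lemma decreasing_chain_stabilises:
  fixes F :: "nat \<Rightarrow> 'a set"
  assumes "finite (F 0)" and decr: "\<And>k. F (Suc k) \<subseteq> F k"
  shows "\<exists>k. F (Suc k) = F k"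
proof (rule ccontr)
  assume "\<nexists>k. F (Suc k) = F k"
  then have strict: "F (Suc k) \<subset> F k" for k using decr by blast
  have fin: "finite (F k)" for k
  proof (induction k)
    case (Suc k)
    then show ?case using decr finite_subset by blast
  qed (rule assms(1))
  have "card (F k) + k \<le> card (F 0)" for k
  proof (induction k)
    case (Suc k)
    moreover have "card (F (Suc k)) < card (F k)" by (rule psubset_card_mono[OF fin strict])
    ultimately show ?case by simp
  qed simp
  from this[of "Suc (card (F 0))"] show False by simp
qed

lemma root_images_stabilise:
  assumes "finite VH"
  shows "\<exists>k. root_images VH EH NH (Suc k) = root_images VH EH NH k"
  by (rule decreasing_chain_stabilises[where F = "root_images VH EH NH",
        OF finite_subset[OF root_images_subset assms] root_images_Suc_subset])

lemma signified_hom_fan_subtree: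
  assumes g: "signified_hom (fan_vertices (Suc k)) (fan_E (Suc k)) (fan_N (Suc k)) VH EH NH g"
    and i: "i < 14"
  shows "signified_hom (fan_vertices k) (fan_E k) (fan_N k) VH EH NH (\<lambda>w. g ([i] @ w))"
  unfolding signified_hom_def
proof (intro conjI ballI allI impI)
  have child: "[i] @ w \<in> fan_vertices (Suc k)" if "w \<in> fan_vertices k" for w
    using that i unfolding fan_vertices_def by auto
  fix v w
  show "g ([i] @ w) \<in> VH" if "w \<in> fan_vertices k"
    using g child[OF that] unfolding signified_hom_def by blast
  assume vw: "fan_E k v w"
  then have "fan_E (Suc k) ([i] @ v) ([i] @ w)"
    using child fan_arc_append unfolding fan_E_def by blast
  moreover have "fan_negative ([i] @ v) ([i] @ w) = fan_negative v w"
    using vw fan_negative_append fan_negative_commute unfolding fan_E_def by metis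
  ultimately show "EH (g ([i] @ v)) (g ([i] @ w))"
    and "NH (g ([i] @ v)) (g ([i] @ w)) \<longleftrightarrow> fan_N k v w"
    using g vw unfolding signified_hom_def fan_N_def by auto
qed

lemma root_images_Suc_fans:
  assumes "x \<in> root_images VH EH NH (Suc k)"
  shows "alternating_fans EH NH (root_images VH EH NH k) x"
proof -
  obtain g where g: "signified_hom (fan_vertices (Suc k)) (fan_E (Suc k)) (fan_N (Suc k)) VH EH NH g"
    and root: "g [] = x"
    using assms unfolding root_images_def by auto
  have g_edge: "EH (g a) (g b) \<and> (NH (g a) (g b) \<longleftrightarrow> fan_negative a b)" if "fan_E (Suc k) a b" for a b
    using g that unfolding signified_hom_def fan_N_def by blast
  have subtree: "g [i] \<in> root_images VH EH NH k" if "i < 14" for i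
    using signified_hom_fan_subtree[OF g that] unfolding root_images_def by force
  have spoke: "EH x (g [i]) \<and> (NH x (g [i]) \<longleftrightarrow> 7 \<le> i)" if "i < 14" for i
  proof -
    have spoke_edge: "fan_E (Suc k) [] [i]"
      using that unfolding fan_E_def fan_arc_def fan_vertices_def by auto
    show ?thesis using g_edge[OF spoke_edge] root by (simp add: fan_negative_def)
  qed
  have rim: "EH (g [i]) (g [Suc i]) \<and> (NH (g [i]) (g [Suc i]) \<longleftrightarrow> odd i)" if "Suc i < 14" for i
  proof -
    have "fan_arc [i] [Suc i]"
      unfolding fan_arc_def using that by (intro disjI2 exI[of _ "[]"] exI[of _ i]) simp
    then have rim_edge: "fan_E (Suc k) [i] [Suc i]"
      using that unfolding fan_E_def fan_vertices_def by auto
    show ?thesis using g_edge[OF rim_edge] by (simp add: fan_negative_def)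
  qed
  have walk: "alternating_walk EH NH (\<lambda>i. g [i]) 13"
    unfolding alternating_walk_def using rim by auto
  then have "alternating_walk EH NH (\<lambda>i. g [i]) 6"
    by (rule alternating_walk_mono) simp
  moreover have "alternating_walk EH NH (\<lambda>i. g [7 + i]) 6"
    using alternating_walk_shift[of EH NH "\<lambda>i. g [i]" 7 6] walk by simp
  moreover have "g [i] \<in> root_images VH EH NH k \<and> EH x (g [i]) \<and> \<not> NH x (g [i]) \<and>
      g [7 + i] \<in> root_images VH EH NH k \<and> NH x (g [7 + i])" if "i \<le> 6" for i
    using that subtree[of i] subtree[of "7 + i"] spoke[of i] spoke[of "7 + i"] by simp
  ultimately show ?thesis
    unfolding alternating_fans_def by blast
qed

section \<open>Signified graphs carrying alternating fans\<close>

locale signified =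
  fixes V :: "'a set" and E N :: "'a \<Rightarrow> 'a \<Rightarrow> bool"
  assumes signified_graph: "signified_graph V E N"
begin

abbreviation pos :: "'a \<Rightarrow> 'a \<Rightarrow> bool" where "pos x y \<equiv> E x y \<and> \<not> N x y"
abbreviation Pos :: "'a \<Rightarrow> 'a set" where "Pos x \<equiv> {y. pos x y}"
abbreviation Neg :: "'a \<Rightarrow> 'a set" where "Neg x \<equiv> {y. N x y}"

lemma finite_V: "finite V"
  and E_in_V: "E x y \<Longrightarrow> x \<in> V \<and> y \<in> V"
  and E_irrefl: "\<not> E x x"
  and E_sym: "E x y \<Longrightarrow> E y x"
  and N_imp_E: "N x y \<Longrightarrow> E x y"
  and N_sym: "N x y \<Longrightarrow> N y x"
  using signified_graph unfolding signified_graph_def by blast+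

lemma pos_sym: "pos x y \<Longrightarrow> pos y x"
  using E_sym N_sym by blast

lemma N_irrefl: "\<not> N x x"
  using E_irrefl N_imp_E by blast

lemma Pos_subset: "Pos x \<subseteq> V"
  using E_in_V by blast

lemma Neg_subset: "Neg x \<subseteq> V"
  using E_in_V N_imp_E by blast

lemma finite_Pos: "finite (Pos x)"
  using finite_subset[OF Pos_subset finite_V] .

lemma finite_Neg: "finite (Neg x)"
  using finite_subset[OF Neg_subset finite_V] .

lemma card_insert_Un_nbhds:
  assumes "S \<subseteq> Pos x" "T \<subseteq> Neg x"
  shows "card (insert x (S \<union> T)) = Suc (card S + card T)"
proof -
  have fin: "finite S" "finite T"
    using assms finite_subset finite_Pos finite_Neg by blast+
  have "x \<notin> S \<union> T"
    using assms E_irrefl N_irrefl by blast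
  then have "card (insert x (S \<union> T)) = Suc (card (S \<union> T))"
    using fin by (simp add: card_insert_disjoint)
  also have "card (S \<union> T) = card S + card T"
    by (rule card_Un_disjoint) (use fin assms in auto)
  finally show ?thesis .
qed

lemma card_alternating_walk4:
  assumes "alternating_walk E N w 4"
  shows "4 \<le> card (w ` {..4})"
proof -
  have e: "E (w 0) (w 1)" "E (w 1) (w 2)" "E (w 2) (w 3)" "E (w 3) (w 4)"
    and s: "N (w 0) (w 1) \<noteq> N (w 1) (w 2)" "N (w 1) (w 2) \<noteq> N (w 2) (w 3)"
      "N (w 2) (w 3) \<noteq> N (w 3) (w 4)"
    using assms unfolding alternating_walk_def by (simp_all add: numeral_eq_Suc)
  have N_commute: "N x y = N y x" for x y using N_sym by blast
  have d: "w 0 \<noteq> w 1" "w 1 \<noteq> w 2" "w 2 \<noteq> w 3" "w 3 \<noteq> w 4"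
    using e E_irrefl by metis+
  have "w 0 \<noteq> w 2" "w 1 \<noteq> w 3" "w 2 \<noteq> w 4"
    using s N_commute by metis+
  have "\<exists>F \<subseteq> w ` {..4}. card F = 4"
  proof (cases "w 0 = w 3")
    case False
    then have "card {w 0, w 1, w 2, w 3} = 4"
      using d \<open>w 0 \<noteq> w 2\<close> \<open>w 1 \<noteq> w 3\<close> by simp
    moreover have "{w 0, w 1, w 2, w 3} \<subseteq> w ` {..4}" by auto
    ultimately show ?thesis by blast
  next
    case True
    then have "w 4 \<noteq> w 1" using s N_commute by metis
    then have "card {w 1, w 2, w 3, w 4} = 4"
      using d \<open>w 1 \<noteq> w 3\<close> \<open>w 2 \<noteq> w 4\<close> by simp
    moreover have "{w 1, w 2, w 3, w 4} \<subseteq> w ` {..4}" by auto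
    ultimately show ?thesis by blast
  qed
  then show ?thesis
    by (metis card_mono finite_atMost finite_imageI)
qed

lemma four_le_card_if_alternating_walk:
  assumes "alternating_walk E N w 6" "w ` {..6} \<subseteq> T" "finite T"
  shows "4 \<le> card T"
proof -
  have "4 \<le> card (w ` {..4})"
    using card_alternating_walk4 alternating_walk_mono[OF assms(1)] by simp
  also have "\<dots> \<le> card T"
  proof (rule card_mono[OF assms(3)])
    have "w ` {..4} \<subseteq> w ` {..6}" by auto
    then show "w ` {..4} \<subseteq> T" using assms(2) by blast
  qed
  finally show ?thesis .
qed

lemma alternating_walk_both_signs:
  assumes walk: "alternating_walk E N w 6" and S: "w ` {..6} \<subseteq> S" "card S = 4" and q: "q \<in> S"
  shows "\<exists>z\<in>S. E q z \<and> (N q z \<longleftrightarrow> c)"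
proof (rule ccontr)
  assume none: "\<not> ?thesis"
  have avoid_q: "w (Suc i) \<noteq> q" if "i < 5" for i
  proof
    assume wq: "w (Suc i) = q"
    have "E q (w i)" "E q (w (Suc (Suc i)))" "N (w i) q \<noteq> N q (w (Suc (Suc i)))"
      using walk that wq E_sym unfolding alternating_walk_def by auto
    then have "E q (w i) \<and> (N q (w i) \<longleftrightarrow> c) \<or> E q (w (Suc (Suc i))) \<and> (N q (w (Suc (Suc i))) \<longleftrightarrow> c)"
      using N_sym by blast
    moreover have "w i \<in> S" "w (Suc (Suc i)) \<in> S" using S(1) that by auto
    ultimately show False
      using none by blast
  qed
  have "w (1 + i) \<in> S - {q}" if "i \<le> 4" for i
    using avoid_q[of i] S(1) that by auto
  then have sub: "(\<lambda>i. w (1 + i)) ` {..4} \<subseteq> S - {q}"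
    by auto
  have "alternating_walk E N (\<lambda>i. w (1 + i)) 4"
    by (rule alternating_walk_shift) (use alternating_walk_mono[OF walk] in simp)
  then have "4 \<le> card ((\<lambda>i. w (1 + i)) ` {..4})"
    by (rule card_alternating_walk4)
  also have "\<dots> \<le> card (S - {q})"
    by (rule card_mono[OF _ sub]) (use S(2) card_ge_0_finite in force)
  finally have "4 \<le> card (S - {q})" .
  then show False using S(2) q by simp
qed

end

locale sp9_like = signified +
  assumes card_V: "card V = 9"
    and complete: "\<lbrakk>x \<in> V; y \<in> V; x \<noteq> y\<rbrakk> \<Longrightarrow> E x y"
    and card_Pos: "x \<in> V \<Longrightarrow> card {y. E x y \<and> \<not> N x y} = 4"
    and card_Neg: "x \<in> V \<Longrightarrow> card {y. N x y} = 4"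
    and pos_triangle: "\<lbrakk>x \<in> V; E x q; \<not> N x q\<rbrakk> \<Longrightarrow> \<exists>z. E x z \<and> \<not> N x z \<and> E q z \<and> \<not> N q z"
    and neg_triangle: "\<lbrakk>x \<in> V; N x q\<rbrakk> \<Longrightarrow> \<exists>z. N x z \<and> N q z"

lemma (in signified) sp9_like_if_alternating_fans:
  assumes card_V: "card V = 9" and A: "A \<subseteq> V" "A \<noteq> {}"
    and fans: "\<And>x. x \<in> A \<Longrightarrow> alternating_fans E N A x"
  shows "sp9_like V E N"
proof -
  have walks: "\<exists>u. alternating_walk E N u 6 \<and> u ` {..6} \<subseteq> A \<inter> Pos x"
    "\<exists>v. alternating_walk E N v 6 \<and> v ` {..6} \<subseteq> A \<inter> Neg x" if "x \<in> A" for x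
    using fans[OF that] unfolding alternating_fans_def image_subset_iff atMost_iff by blast+
  have large: "4 \<le> card (A \<inter> Pos x)" "4 \<le> card (A \<inter> Neg x)" if "x \<in> A" for x
    using walks[OF that] four_le_card_if_alternating_walk finite_Pos finite_Neg by blast+
  obtain x0 where x0: "x0 \<in> A" using A(2) by blast
  have "9 \<le> card (insert x0 ((A \<inter> Pos x0) \<union> (A \<inter> Neg x0)))"
    using card_insert_Un_nbhds[of "A \<inter> Pos x0" x0 "A \<inter> Neg x0"] large[OF x0] by simp
  also have "\<dots> \<le> card A"
    by (rule card_mono) (use x0 finite_subset[OF A(1) finite_V] in auto)
  finally have A_eq: "A = V"
    using card_subset_eq[OF finite_V A(1)] card_mono[OF finite_V A(1)] card_V by simp
  have nbhd: "card (Pos x) = 4 \<and> card (Neg x) = 4 \<and> insert x (Pos x \<union> Neg x) = V" if x: "x \<in> V" for x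
  proof -
    have "4 \<le> card (Pos x)" "4 \<le> card (Neg x)"
      using large[of x] x A_eq Int_absorb1[OF Pos_subset] Int_absorb1[OF Neg_subset] by simp_all
    moreover have sub: "insert x (Pos x \<union> Neg x) \<subseteq> V"
      using x Pos_subset Neg_subset by blast
    moreover note card_mono[OF finite_V sub] card_insert_Un_nbhds[of "Pos x" x "Neg x"]
    ultimately show ?thesis
      using card_subset_eq[OF finite_V sub] card_V by simp
  qed
  show ?thesis
  proof (intro sp9_like.intro sp9_like_axioms.intro)
    show "signified V E N" by (rule signified_axioms)
    show "card V = 9" by (rule card_V)
    show "card (Pos x) = 4" "card (Neg x) = 4" if "x \<in> V" for x
      using nbhd[OF that] by blast+
    show "E x y" if "x \<in> V" "y \<in> V" "x \<noteq> y" for x y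
      using nbhd[OF that(1)] that(2,3) N_imp_E by blast
    show "\<exists>z. E x z \<and> \<not> N x z \<and> E q z \<and> \<not> N q z" if x: "x \<in> V" and q: "E x q" "\<not> N x q" for x q
    proof -
      obtain u where "alternating_walk E N u 6" "u ` {..6} \<subseteq> Pos x"
        using walks(1)[of x] x A_eq by blast
      from alternating_walk_both_signs[OF this, of q False] nbhd[OF x] q
      show ?thesis by auto
    qed
    show "\<exists>z. N x z \<and> N q z" if x: "x \<in> V" and q: "N x q" for x q
    proof -
      obtain v where "alternating_walk E N v 6" "v ` {..6} \<subseteq> Neg x"
        using walks(2)[of x] x A_eq by blast
      from alternating_walk_both_signs[OF this, of q True] nbhd[OF x] q
      show ?thesis by auto
    qed
  qed
qed

section \<open>The field of nine elements\<close>

definition rook_adj :: "int \<times> int \<Rightarrow> int \<times> int \<Rightarrow> bool" where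
  "rook_adj u v \<longleftrightarrow> u \<noteq> v \<and> (fst u = fst v \<or> snd u = snd v)"

lemma F9_explicit: "F9 = {(0,0), (0,1), (0,2), (1,0), (1,1), (1,2), (2,0), (2,1), (2,2)}"
proof -
  have "{0..2::int} = {0, 1, 2}" by auto
  then show ?thesis unfolding F9_def by auto
qed

lemma finite_F9: "finite F9"
  unfolding F9_def by simp

lemma card_F9: "card F9 = 9"
  unfolding F9_explicit by simp

lemma card_rook_nbrs:
  assumes "u \<in> F9"
  shows "card {v \<in> F9. rook_adj u v} = 4"
proof -
  have filter_insert: "{v \<in> insert a A. Q v} = (if Q a then insert a {v \<in> A. Q v} else {v \<in> A. Q v})"
    for a :: "int \<times> int" and A Q by auto
  show ?thesis
    using assms unfolding F9_explicit
    by (elim insertE emptyE; simp only: filter_insert; simp add: rook_adj_def)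
qed

lemma f9_nonsquare_iff: "f9_nonsquare z \<longleftrightarrow> z \<in> F9 \<and> fst z \<noteq> 0 \<and> snd z \<noteq> 0"
proof -
  have squares: "(\<lambda>w. f9_mul w w) ` F9 = {(0,0), (1,0), (2,0), (0,1), (0,2)}"
    unfolding F9_explicit by (auto simp: f9_mul_def)
  have "f9_nonsquare z \<longleftrightarrow> z \<in> F9 \<and> z \<notin> (\<lambda>w. f9_mul w w) ` F9"
    unfolding f9_nonsquare_def by blast
  also have "\<dots> \<longleftrightarrow> z \<in> F9 \<and> fst z \<noteq> 0 \<and> snd z \<noteq> 0"
    unfolding squares by (cases z) (auto simp: F9_explicit)
  finally show ?thesis .
qed

lemma SP9_N_iff:
  assumes "u \<in> F9" "v \<in> F9"
  shows "SP9_N u v \<longleftrightarrow> fst u \<noteq> fst v \<and> snd u \<noteq> snd v"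
  using assms unfolding F9_explicit
  by (elim insertE emptyE) (simp_all add: SP9_N_def SP9_E_def f9_nonsquare_iff f9_sub_def F9_def)

section \<open>Positive triangles and the rook's graph\<close>

lemma sum_le_card_imp_eq_1:
  fixes f :: "'a \<Rightarrow> nat"
  assumes "finite S" and ge1: "\<And>u. u \<in> S \<Longrightarrow> 1 \<le> f u" and "sum f S \<le> card S" and "q \<in> S"
  shows "f q = 1"
proof (rule ccontr)
  assume "f q \<noteq> 1"
  then have "1 < f q"
    using ge1[OF assms(4)] by linarith
  have "(\<Sum>u\<in>S. 1) < sum f S"
    by (rule sum_strict_mono_ex1) (use assms(1,4) ge1 \<open>1 < f q\<close> in auto)
  with assms(3) show False by simp
qed

context signified
begin

definition pos_deg :: "'a set \<Rightarrow> 'a \<Rightarrow> nat" where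
  "pos_deg T u = card {y \<in> T. pos u y}"

lemma pos_deg_Un:
  assumes "S \<inter> T = {}" "finite S" "finite T"
  shows "pos_deg (S \<union> T) u = pos_deg S u + pos_deg T u"
proof -
  have "{y \<in> S \<union> T. pos u y} = {y \<in> S. pos u y} \<union> {y \<in> T. pos u y}" by blast
  then show ?thesis
    unfolding pos_deg_def using assms by (simp add: card_Un_disjoint disjoint_iff)
qed

lemma sum_pos_deg_swap:
  assumes "finite S" "finite T"
  shows "(\<Sum>u\<in>S. pos_deg T u) = (\<Sum>m\<in>T. pos_deg S m)"
  unfolding pos_deg_def
proof (rule sum_multicount_gen[OF assms])
  have "{u \<in> S. pos u m} = {y \<in> S. pos m y}" for m
    using pos_sym by blast
  then show "\<forall>m\<in>T. card {u \<in> S. pos u m} = card {y \<in> S. pos m y}"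
    by simp
qed

end

context sp9_like
begin

lemma V_eq_closed_nbhd: "x \<in> V \<Longrightarrow> V = insert x (Pos x \<union> Neg x)"
  using complete Pos_subset Neg_subset by blast

lemma pos_deg_Pos_Un_Neg:
  "pos_deg (Pos x \<union> Neg x) u = pos_deg (Pos x) u + pos_deg (Neg x) u"
  by (rule pos_deg_Un) (use finite_Pos finite_Neg in auto)

lemma pos_deg_pos_nbr:
  assumes x: "x \<in> V" and u: "pos x u"
  shows "pos_deg (Pos x) u + pos_deg (Neg x) u = 3"
proof -
  have "Pos u = insert x {y \<in> Pos x \<union> Neg x. pos u y}"
    using V_eq_closed_nbhd[OF x] Pos_subset[of u] u pos_sym by blast
  moreover have "x \<notin> {y \<in> Pos x \<union> Neg x. pos u y}"
    using E_irrefl N_irrefl by blast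
  moreover have "finite {y \<in> Pos x \<union> Neg x. pos u y}"
    using finite_Pos finite_Neg by simp
  ultimately have "card (Pos u) = Suc (pos_deg (Pos x \<union> Neg x) u)"
    unfolding pos_deg_def by (metis card_insert_disjoint)
  moreover have "card (Pos u) = 4"
    using card_Pos u E_in_V by blast
  ultimately show ?thesis
    using pos_deg_Pos_Un_Neg by simp
qed

lemma pos_deg_neg_nbr:
  assumes x: "x \<in> V" and m: "N x m"
  shows "pos_deg (Pos x) m + pos_deg (Neg x) m = 4"
proof -
  have "Pos m = {y \<in> Pos x \<union> Neg x. pos m y}"
    using V_eq_closed_nbhd[OF x] Pos_subset[of m] m N_sym by blast
  then have "card (Pos m) = pos_deg (Pos x \<union> Neg x) m"
    unfolding pos_deg_def by simp
  moreover have "card (Pos m) = 4"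
    using card_Pos m N_imp_E E_in_V by blast
  ultimately show ?thesis
    using pos_deg_Pos_Un_Neg by simp
qed

lemma one_le_pos_deg_Pos:
  assumes x: "x \<in> V" and u: "pos x u"
  shows "1 \<le> pos_deg (Pos x) u"
proof -
  obtain z where "pos x z" "pos u z"
    using pos_triangle[OF x] u by blast
  then have "z \<in> {y \<in> Pos x. pos u y}" by blast
  moreover have "finite {y \<in> Pos x. pos u y}" using finite_Pos by simp
  ultimately have "card {y \<in> Pos x. pos u y} \<noteq> 0" by auto
  then show ?thesis unfolding pos_deg_def by simp
qed

lemma pos_deg_Neg_le_2:
  assumes x: "x \<in> V" and m: "N x m"
  shows "pos_deg (Neg x) m \<le> 2"
proof -
  obtain z where z: "N x z" "N m z"
    using neg_triangle[OF x m] by blast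
  have sub: "{y \<in> Neg x. pos m y} \<subseteq> Neg x - {m, z}"
    using z E_irrefl by blast
  have "m \<noteq> z" using z(2) N_irrefl by blast
  moreover have "{m, z} \<subseteq> Neg x" using m z(1) by blast
  ultimately have "card (Neg x - {m, z}) = 2"
    using card_Neg[OF x] finite_Neg by (simp add: card_Diff_subset)
  with card_mono[OF finite_Diff[OF finite_Neg] sub] show ?thesis
    unfolding pos_deg_def by simp
qed

text \<open>Counting the positive edges between the positive and the negative neighbourhood of \<open>x\<close>
  from both sides shows that \<open>Pos x\<close> spans at most two positive edges; as no vertex of \<open>Pos x\<close>
  is isolated in it, they form a perfect matching.\<close>

lemma card_common_pos_nbrs:
  assumes x: "x \<in> V" and q: "pos x q"
  shows "card (Pos x \<inter> Pos q) = 1"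
proof -
  let ?S = "Pos x" and ?M = "Neg x"
  have "(\<Sum>u\<in>?S. pos_deg ?S u) + (\<Sum>u\<in>?S. pos_deg ?M u) = 12"
    using pos_deg_pos_nbr[OF x] card_Pos[OF x] by (simp add: sum.distrib[symmetric])
  moreover have "(\<Sum>m\<in>?M. pos_deg ?S m) + (\<Sum>m\<in>?M. pos_deg ?M m) = 16"
    using pos_deg_neg_nbr[OF x] card_Neg[OF x] by (simp add: sum.distrib[symmetric])
  moreover have "(\<Sum>m\<in>?M. pos_deg ?M m) \<le> 8"
    using sum_bounded_above[of ?M "pos_deg ?M" 2] pos_deg_Neg_le_2[OF x] card_Neg[OF x] by simp
  moreover note sum_pos_deg_swap[OF finite_Pos finite_Neg, of x x]
  ultimately have "(\<Sum>u\<in>?S. pos_deg ?S u) \<le> card ?S"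
    using card_Pos[OF x] by linarith
  then have "pos_deg ?S q = 1"
    using sum_le_card_imp_eq_1[of ?S "pos_deg ?S" q] finite_Pos one_le_pos_deg_Pos[OF x] q by blast
  moreover have "Pos x \<inter> Pos q = {y \<in> ?S. pos q y}" by blast
  ultimately show ?thesis unfolding pos_deg_def by simp
qed

lemma common_pos_nbr_unique:
  assumes "x \<in> V" "pos x q" "y \<in> Pos x \<inter> Pos q" "z \<in> Pos x \<inter> Pos q"
  shows "y = z"
proof -
  obtain w where "Pos x \<inter> Pos q = {w}"
    using card_common_pos_nbrs[OF assms(1,2)] by (rule card_1_singletonE)
  with assms(3,4) show ?thesis by auto
qed

lemma common_pos_nbr_exists:
  assumes "x \<in> V" "pos x q"
  obtains y where "Pos x \<inter> Pos q = {y}"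
  using card_common_pos_nbrs[OF assms] by (rule card_1_singletonE)

text \<open>If \<open>pos x a\<close>, the unique common positive neighbour \<open>a'\<close> of \<open>x\<close> and \<open>a\<close> is called the
  partner of \<open>a\<close>; \<open>{x, a, a'}\<close> will be a line of the rook's graph.\<close>

lemma partner_sym:
  assumes x: "x \<in> V" and a: "pos x a" and partner: "Pos x \<inter> Pos a = {a'}"
  shows "Pos x \<inter> Pos a' = {a}"
proof -
  have a': "pos x a'" "pos a a'" using partner by blast+
  obtain a'' where a'': "Pos x \<inter> Pos a' = {a''}"
    using common_pos_nbr_exists[OF x a'(1)] .
  have "a \<in> Pos x \<inter> Pos a'" using a a'(2) pos_sym by blast
  with a'' show ?thesis by auto
qed

lemma Pos_partner_eq:
  assumes x: "x \<in> V" and a: "pos x a" and partner: "Pos x \<inter> Pos a = {a'}"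
  shows "Pos a = insert x (insert a' (Pos a \<inter> Neg x))"
proof
  show "Pos a \<subseteq> insert x (insert a' (Pos a \<inter> Neg x))"
    using V_eq_closed_nbhd[OF x] Pos_subset[of a] partner by blast
  show "insert x (insert a' (Pos a \<inter> Neg x)) \<subseteq> Pos a"
    using a partner pos_sym by blast
qed

lemma card_Pos_Neg_partner:
  assumes x: "x \<in> V" and a: "pos x a" and partner: "Pos x \<inter> Pos a = {a'}"
  shows "card (Pos a \<inter> Neg x) = 2"
proof -
  have a': "pos x a'" using partner by blast
  have fin: "finite (Pos a \<inter> Neg x)" using finite_Neg by blast
  have a'_notin: "a' \<notin> Pos a \<inter> Neg x" using a' by blast
  have x_notin: "x \<notin> insert a' (Pos a \<inter> Neg x)" using a' E_irrefl N_irrefl by blast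
  have "card (Pos a) = card (insert x (insert a' (Pos a \<inter> Neg x)))"
    using Pos_partner_eq[OF assms] by (rule arg_cong)
  also have "\<dots> = Suc (card (insert a' (Pos a \<inter> Neg x)))"
    using fin x_notin by (rule card_insert_disjoint[OF finite_insert[THEN iffD2]])
  also have "card (insert a' (Pos a \<inter> Neg x)) = Suc (card (Pos a \<inter> Neg x))"
    using fin a'_notin by (rule card_insert_disjoint)
  finally have "card (Pos a) = Suc (Suc (card (Pos a \<inter> Neg x)))" .
  moreover have "card (Pos a) = 4"
    using a E_in_V card_Pos by blast
  ultimately show ?thesis by simp
qed

lemma Pos_Neg_partners_disjoint:
  assumes x: "x \<in> V" and "pos x a" "pos x a'" "pos a a'"
  shows "Pos a \<inter> Pos a' \<inter> Neg x = {}"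
proof -
  have aV: "a \<in> V" using assms(2) E_in_V by blast
  have "m = x" if m: "m \<in> Pos a \<inter> Pos a' \<inter> Neg x" for m
  proof (rule common_pos_nbr_unique[OF aV assms(4)])
    show "m \<in> Pos a \<inter> Pos a'" using m by blast
    show "x \<in> Pos a \<inter> Pos a'" using assms(2,3) pos_sym by blast
  qed
  then show ?thesis using E_irrefl N_imp_E by blast
qed

lemma pos_Neg_partner:
  assumes x: "x \<in> V" and a: "pos x a" and partner: "Pos x \<inter> Pos a = {a'}"
    and mm: "Pos a \<inter> Neg x = {m, m'}"
  shows "pos m m'"
proof -
  have m: "pos a m" "N x m" using mm by blast+
  have aV: "a \<in> V" using a E_in_V by blast
  obtain z where z: "pos a z" "pos m z" using pos_triangle[OF aV] m(1) by blast
  have "z \<in> insert x (insert a' {m, m'})"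
    using Pos_partner_eq[OF x a partner] mm z(1) by blast
  moreover have "z \<noteq> x" using z(2) m(2) N_sym by blast
  moreover have "z \<noteq> a'"
  proof
    assume "z = a'"
    have "pos x a'" "pos a a'" using partner by blast+
    then have "Pos a \<inter> Pos a' \<inter> Neg x = {}" using Pos_Neg_partners_disjoint[OF x a] by blast
    then show False using m z \<open>z = a'\<close> pos_sym by blast
  qed
  moreover have "z \<noteq> m" using z(2) E_irrefl by blast
  ultimately have "z = m'" by blast
  then show ?thesis using z(2) by simp
qed

lemma Neg_eq_partner_Un:
  assumes x: "x \<in> V" and a: "pos x a" and partner: "Pos x \<inter> Pos a = {a'}"
  shows "Neg x = (Pos a \<inter> Neg x) \<union> (Pos a' \<inter> Neg x)"
proof -
  have a': "pos x a'" "pos a a'" using partner by blast+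
  have partner': "Pos x \<inter> Pos a' = {a}" by (rule partner_sym[OF x a partner])
  have "card ((Pos a \<inter> Neg x) \<union> (Pos a' \<inter> Neg x)) = card (Pos a \<inter> Neg x) + card (Pos a' \<inter> Neg x)"
    by (rule card_Un_disjoint) (use finite_Neg Pos_Neg_partners_disjoint[OF x a a'] in auto)
  also have "\<dots> = card (Neg x)"
    using card_Pos_Neg_partner[OF x a partner] card_Pos_Neg_partner[OF x a'(1) partner'] card_Neg[OF x]
    by simp
  finally have "card ((Pos a \<inter> Neg x) \<union> (Pos a' \<inter> Neg x)) = card (Neg x)" .
  then show ?thesis
    using card_subset_eq[OF finite_Neg, of "(Pos a \<inter> Neg x) \<union> (Pos a' \<inter> Neg x)" x] by simp
qed

lemma card_grid_cell_le_1:
  assumes x: "x \<in> V" and a: "pos x a" and partner: "Pos x \<inter> Pos a = {a'}" and "b \<noteq> a"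
  shows "card (Pos a \<inter> Pos b \<inter> Neg x) \<le> 1"
proof -
  have fin: "finite (Pos a \<inter> Neg x)" "finite (Pos a \<inter> Pos b \<inter> Neg x)"
    using finite_Neg by auto
  have "m = m'" if m: "m \<in> Pos a \<inter> Pos b \<inter> Neg x" and m': "m' \<in> Pos a \<inter> Pos b \<inter> Neg x" for m m'
  proof (rule ccontr)
    assume "m \<noteq> m'"
    have sub: "{m, m'} \<subseteq> Pos a \<inter> Neg x" using m m' by blast
    have "card {m, m'} = card (Pos a \<inter> Neg x)"
      using \<open>m \<noteq> m'\<close> card_Pos_Neg_partner[OF x a partner] by simp
    then have "Pos a \<inter> Neg x = {m, m'}"
      using card_subset_eq[OF fin(1) sub] by simp
    then have "pos m m'" by (rule pos_Neg_partner[OF x a partner])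
    moreover have "m \<in> V" using m E_in_V by blast
    moreover have "a \<in> Pos m \<inter> Pos m'" "b \<in> Pos m \<inter> Pos m'"
      using m m' pos_sym by blast+
    ultimately have "a = b" using common_pos_nbr_unique by blast
    with \<open>b \<noteq> a\<close> show False by simp
  qed
  then have "card (Pos a \<inter> Pos b \<inter> Neg x) \<le> Suc 0"
    using card_le_Suc0_iff_eq[OF fin(2)] by blast
  then show ?thesis by simp
qed

lemma Pos_Neg_partner_split:
  assumes x: "x \<in> V" and b: "pos x b" and pb: "Pos x \<inter> Pos b = {b'}"
  shows "Pos a \<inter> Neg x = (Pos a \<inter> Pos b \<inter> Neg x) \<union> (Pos a \<inter> Pos b' \<inter> Neg x)"
proof -
  have "Pos a \<inter> Neg x = Pos a \<inter> ((Pos b \<inter> Neg x) \<union> (Pos b' \<inter> Neg x))"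
    using Neg_eq_partner_Un[OF x b pb] by (rule arg_cong)
  also have "\<dots> = (Pos a \<inter> Pos b \<inter> Neg x) \<union> (Pos a \<inter> Pos b' \<inter> Neg x)"
    by blast
  finally show ?thesis .
qed

lemma grid_cell:
  assumes x: "x \<in> V" and a: "pos x a" and pa: "Pos x \<inter> Pos a = {a'}"
    and b: "pos x b" and pb: "Pos x \<inter> Pos b = {b'}" and "a \<noteq> b" "a \<noteq> b'"
  obtains c where "Pos a \<inter> Pos b \<inter> Neg x = {c}"
proof -
  have "card (Pos a \<inter> Neg x) \<le> card (Pos a \<inter> Pos b \<inter> Neg x) + card (Pos a \<inter> Pos b' \<inter> Neg x)"
    by (simp only: Pos_Neg_partner_split[OF x b pb] card_Un_le)
  then have "2 \<le> card (Pos a \<inter> Pos b \<inter> Neg x) + card (Pos a \<inter> Pos b' \<inter> Neg x)"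
    using card_Pos_Neg_partner[OF x a pa] by simp
  moreover have "card (Pos a \<inter> Pos b \<inter> Neg x) \<le> 1" "card (Pos a \<inter> Pos b' \<inter> Neg x) \<le> 1"
    using card_grid_cell_le_1[OF x a pa] \<open>a \<noteq> b\<close> \<open>a \<noteq> b'\<close> by auto
  ultimately have "card (Pos a \<inter> Pos b \<inter> Neg x) = 1" by linarith
  then show ?thesis by (rule card_1_singletonE) (rule that)
qed

lemma pos_nbhd_partners:
  assumes x: "x \<in> V"
  obtains a1 a2 b1 b2 where "Pos x = {a1, a2, b1, b2}"
    "Pos x \<inter> Pos a1 = {a2}" "Pos x \<inter> Pos a2 = {a1}" "Pos x \<inter> Pos b1 = {b2}" "Pos x \<inter> Pos b2 = {b1}"
    "a1 \<noteq> b1" "a1 \<noteq> b2" "a2 \<noteq> b1" "a2 \<noteq> b2"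
proof -
  have card_S: "card (Pos x) = 4" by (rule card_Pos[OF x])
  then obtain a1 where a1: "pos x a1"
    by (metis (no_types, lifting) card.empty ex_in_conv mem_Collect_eq zero_neq_numeral)
  obtain a2 where pa1: "Pos x \<inter> Pos a1 = {a2}"
    using common_pos_nbr_exists[OF x a1] .
  have pa2: "Pos x \<inter> Pos a2 = {a1}" by (rule partner_sym[OF x a1 pa1])
  have a2: "pos x a2" "pos a1 a2" using pa1 by blast+
  have "a1 \<noteq> a2" using a2(2) E_irrefl by blast
  then have "card (Pos x - {a1, a2}) = 2"
    using a1 a2(1) card_S finite_Pos by (simp add: card_Diff_subset)
  then obtain b1 b2 where b: "Pos x - {a1, a2} = {b1, b2}"
    by (meson card_2_iff)
  have b1: "pos x b1" "b1 \<noteq> a1" "b1 \<noteq> a2" and b2: "pos x b2" "b2 \<noteq> a1" "b2 \<noteq> a2"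
    using b by blast+
  have Pos_x: "Pos x = {a1, a2, b1, b2}"
    using b a1 a2(1) by blast
  obtain b where pb1: "Pos x \<inter> Pos b1 = {b}"
    using common_pos_nbr_exists[OF x b1(1)] .
  have "b = b2"
  proof -
    have "pos x b" "pos b1 b" using pb1 by blast+
    moreover have "b \<noteq> a1" using pa1 \<open>pos b1 b\<close> b1 pos_sym by blast
    moreover have "b \<noteq> a2" using pa2 \<open>pos b1 b\<close> b1 pos_sym by blast
    moreover have "b \<noteq> b1" using \<open>pos b1 b\<close> E_irrefl by blast
    ultimately show ?thesis using Pos_x by blast
  qed
  with pb1 have pb1': "Pos x \<inter> Pos b1 = {b2}" by simp
  have pb2: "Pos x \<inter> Pos b2 = {b1}" by (rule partner_sym[OF x b1(1) pb1'])
  show ?thesis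
    using that[OF Pos_x pa1 pa2 pb1' pb2] b1 b2 by blast
qed

lemma neg_nbhd_grid:
  assumes x: "x \<in> V" and Pos_x: "Pos x = {a1, a2, b1, b2}"
    and pa1: "Pos x \<inter> Pos a1 = {a2}" and pa2: "Pos x \<inter> Pos a2 = {a1}"
    and pb1: "Pos x \<inter> Pos b1 = {b2}" and pb2: "Pos x \<inter> Pos b2 = {b1}"
    and ab: "a1 \<noteq> b1" "a1 \<noteq> b2" "a2 \<noteq> b1" "a2 \<noteq> b2"
  obtains c11 c12 c21 c22 where
    "Pos a1 \<inter> Neg x = {c11, c12}" "Pos a2 \<inter> Neg x = {c21, c22}"
    "Pos b1 \<inter> Neg x = {c11, c21}" "Pos b2 \<inter> Neg x = {c12, c22}"
proof -
  have pos_x: "pos x a1" "pos x a2" "pos x b1" "pos x b2"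
    using Pos_x by (simp_all add: set_eq_iff)
  obtain c11 where c11: "Pos a1 \<inter> Pos b1 \<inter> Neg x = {c11}"
    using grid_cell[OF x pos_x(1) pa1 pos_x(3) pb1 ab(1,2)] .
  obtain c12 where c12: "Pos a1 \<inter> Pos b2 \<inter> Neg x = {c12}"
    using grid_cell[OF x pos_x(1) pa1 pos_x(4) pb2 ab(2,1)] .
  obtain c21 where c21: "Pos a2 \<inter> Pos b1 \<inter> Neg x = {c21}"
    using grid_cell[OF x pos_x(2) pa2 pos_x(3) pb1 ab(3,4)] .
  obtain c22 where c22: "Pos a2 \<inter> Pos b2 \<inter> Neg x = {c22}"
    using grid_cell[OF x pos_x(2) pa2 pos_x(4) pb2 ab(4,3)] .
  have rows: "Pos a1 \<inter> Neg x = {c11, c12}" "Pos a2 \<inter> Neg x = {c21, c22}"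
    by (simp_all only: Pos_Neg_partner_split[OF x pos_x(3) pb1] c11 c12 c21 c22) auto
  have "Pos b1 \<inter> Pos a1 \<inter> Neg x = {c11}" "Pos b2 \<inter> Pos a1 \<inter> Neg x = {c12}"
    "Pos b1 \<inter> Pos a2 \<inter> Neg x = {c21}" "Pos b2 \<inter> Pos a2 \<inter> Neg x = {c22}"
    by (simp_all only: Int_commute[of "Pos b1"] Int_commute[of "Pos b2"] c11 c12 c21 c22)
  then have cols: "Pos b1 \<inter> Neg x = {c11, c21}" "Pos b2 \<inter> Neg x = {c12, c22}"
    by (simp_all only: Pos_Neg_partner_split[OF x pos_x(1) pa1]) auto
  from rows cols show ?thesis by (rule that)
qed

lemma rook_grid:
  obtains g where "g ` F9 = V" "\<And>u v. u \<in> F9 \<Longrightarrow> v \<in> F9 \<Longrightarrow> rook_adj u v \<Longrightarrow> pos (g u) (g v)"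
proof -
  obtain x where x: "x \<in> V"
    using card_V by (metis card.empty ex_in_conv zero_neq_numeral)
  obtain a1 a2 b1 b2 where Pos_x: "Pos x = {a1, a2, b1, b2}"
    and pa1: "Pos x \<inter> Pos a1 = {a2}" and pa2: "Pos x \<inter> Pos a2 = {a1}"
    and pb1: "Pos x \<inter> Pos b1 = {b2}" and pb2: "Pos x \<inter> Pos b2 = {b1}"
    and ab: "a1 \<noteq> b1" "a1 \<noteq> b2" "a2 \<noteq> b1" "a2 \<noteq> b2"
    by (rule pos_nbhd_partners[OF x])
  obtain c11 c12 c21 c22 where rows: "Pos a1 \<inter> Neg x = {c11, c12}" "Pos a2 \<inter> Neg x = {c21, c22}"
    and cols: "Pos b1 \<inter> Neg x = {c11, c21}" "Pos b2 \<inter> Neg x = {c12, c22}"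
    by (rule neg_nbhd_grid[OF x Pos_x pa1 pa2 pb1 pb2 ab])
  have pos_x: "pos x a1" "pos x a2" "pos x b1" "pos x b2"
    using Pos_x by (simp_all add: set_eq_iff)
  have "Neg x = (Pos a1 \<inter> Neg x) \<union> (Pos a2 \<inter> Neg x)"
    by (rule Neg_eq_partner_Un[OF x pos_x(1) pa1])
  also have "\<dots> = {c11, c12, c21, c22}"
    by (simp only: rows) auto
  finally have Neg_x: "Neg x = {c11, c12, c21, c22}" .
  have "V = insert x (Pos x \<union> Neg x)"
    by (rule V_eq_closed_nbhd[OF x])
  also have "\<dots> = {x, a1, a2, b1, b2, c11, c12, c21, c22}"
    by (simp only: Pos_x Neg_x) auto
  finally have V_eq: "V = {x, a1, a2, b1, b2, c11, c12, c21, c22}" .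
  have partner_edges: "pos a1 a2" "pos b1 b2"
    using pa1 pb1 by blast+
  have "c11 \<in> Pos a1 \<inter> Neg x" "c12 \<in> Pos a1 \<inter> Neg x" "c21 \<in> Pos a2 \<inter> Neg x"
    "c22 \<in> Pos a2 \<inter> Neg x" "c11 \<in> Pos b1 \<inter> Neg x" "c21 \<in> Pos b1 \<inter> Neg x"
    "c12 \<in> Pos b2 \<inter> Neg x" "c22 \<in> Pos b2 \<inter> Neg x"
    by (simp_all only: rows cols insert_iff simp_thms)
  then have cell_edges: "pos a1 c11" "pos a1 c12" "pos a2 c21" "pos a2 c22"
    "pos b1 c11" "pos b1 c21" "pos b2 c12" "pos b2 c22"
    by blast+
  note pos_edges = pos_x partner_edges cell_edges
    pos_Neg_partner[OF x pos_x(1) pa1 rows(1)] pos_Neg_partner[OF x pos_x(2) pa2 rows(2)]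
    pos_Neg_partner[OF x pos_x(3) pb1 cols(1)] pos_Neg_partner[OF x pos_x(4) pb2 cols(2)]
  define g where "g u = (if u = (0, 0) then x else if u = (1, 0) then a1 else if u = (2, 0) then a2
    else if u = (0, 1) then b1 else if u = (0, 2) then b2 else if u = (1, 1) then c11
    else if u = (1, 2) then c12 else if u = (2, 1) then c21 else c22)" for u :: "int \<times> int"
  show ?thesis
  proof (rule that)
    show "g ` F9 = V"
      unfolding V_eq F9_explicit by (simp add: g_def insert_commute)
    show "pos (g u) (g v)" if "u \<in> F9" "v \<in> F9" "rook_adj u v" for u v
      using that pos_edges pos_edges[THEN pos_sym] unfolding F9_explicit
      by (elim insertE emptyE) (simp_all add: g_def rook_adj_def)
  qed
qed

lemma inj_on_if_image_F9:
  assumes "g ` F9 = V"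
  shows "inj_on g F9"
  by (rule eq_card_imp_inj_on[OF finite_F9]) (simp add: assms card_V card_F9)

text \<open>Since every vertex has exactly four positive neighbours, the four rook neighbours of \<open>u\<close>
  account for all positive neighbours of \<open>g u\<close>.\<close>

lemma pos_iff_rook_adj:
  assumes g: "g ` F9 = V"
    and grid: "\<And>u v. u \<in> F9 \<Longrightarrow> v \<in> F9 \<Longrightarrow> rook_adj u v \<Longrightarrow> pos (g u) (g v)"
    and uv: "u \<in> F9" "v \<in> F9"
  shows "pos (g u) (g v) \<longleftrightarrow> rook_adj u v"
proof -
  note inj = inj_on_if_image_F9[OF g]
  have Pos_g: "Pos (g u) = g ` {w \<in> F9. rook_adj u w}"
  proof (rule card_subset_eq[OF finite_Pos, symmetric])
    show "g ` {w \<in> F9. rook_adj u w} \<subseteq> Pos (g u)" using grid uv(1) by blast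
    have "card (g ` {w \<in> F9. rook_adj u w}) = 4"
      using card_image[OF inj_on_subset[OF inj]] card_rook_nbrs[OF uv(1)] by simp
    moreover have "card (Pos (g u)) = 4" using card_Pos g uv(1) by blast
    ultimately show "card (g ` {w \<in> F9. rook_adj u w}) = card (Pos (g u))" by simp
  qed
  show ?thesis
  proof
    assume "pos (g u) (g v)"
    then have "g v \<in> g ` {w \<in> F9. rook_adj u w}" using Pos_g by blast
    then show "rook_adj u v" using inj uv(2) by (auto simp: inj_on_eq_iff)
  qed (rule grid[OF uv])
qed

lemma signified_iso_SP9:
  obtains f where "signified_iso V E N F9 SP9_E SP9_N f"
proof -
  obtain g where g: "g ` F9 = V"
    and grid: "\<And>u v. u \<in> F9 \<Longrightarrow> v \<in> F9 \<Longrightarrow> rook_adj u v \<Longrightarrow> pos (g u) (g v)"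
    using rook_grid by blast
  note inj = inj_on_if_image_F9[OF g]
  define f where "f = inv_into F9 g"
  have "bij_betw g F9 V" using inj g by (simp add: bij_betw_def)
  then have bij: "bij_betw f V F9"
    unfolding f_def by (rule bij_betw_inv_into)
  have "(SP9_E (f (g u)) (f (g v)) \<longleftrightarrow> E (g u) (g v)) \<and> (SP9_N (f (g u)) (f (g v)) \<longleftrightarrow> N (g u) (g v))"
    if uv: "u \<in> F9" "v \<in> F9" for u v
  proof -
    have f: "f (g u) = u" "f (g v) = v" unfolding f_def using inj uv by simp_all
    have E_iff: "E (g u) (g v) \<longleftrightarrow> u \<noteq> v"
      using complete[of "g u" "g v"] E_irrefl g uv inj_on_eq_iff[OF inj] by blast
    have "SP9_E u v \<longleftrightarrow> u \<noteq> v" using uv unfolding SP9_E_def by simp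
    moreover have "SP9_N u v \<longleftrightarrow> u \<noteq> v \<and> \<not> rook_adj u v"
      using SP9_N_iff[OF uv] unfolding rook_adj_def by auto
    moreover have "N (g u) (g v) \<longleftrightarrow> E (g u) (g v) \<and> \<not> pos (g u) (g v)"
      using N_imp_E by blast
    ultimately show ?thesis
      unfolding f using E_iff pos_iff_rook_adj[OF g grid uv] by blast
  qed
  then show ?thesis
    using that bij g unfolding signified_iso_def by blast
qed

end

theorem mainTheorem14:
  fixes VH :: "'b set" and EH NH :: "'b \<Rightarrow> 'b \<Rightarrow> bool"
  assumes "signified_graph VH EH NH"
    and "card VH = 9"
    and "\<forall>(V::nat set) E N. signified_graph V E N \<and> outerplanar V E \<longrightarrow>
           (\<exists>g. signified_hom V E N VH EH NH g)"
  shows "\<exists>f. signified_iso VH EH NH F9 SP9_E SP9_N f"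
proof -
  interpret signified VH EH NH by (rule signified.intro[OF assms(1)])
  have univ: "outerplanar_universal VH EH NH"
    unfolding outerplanar_universal_def using assms(3) .
  obtain k where stable: "root_images VH EH NH (Suc k) = root_images VH EH NH k"
    using root_images_stabilise[OF finite_V] by blast
  have "sp9_like VH EH NH"
  proof (rule sp9_like_if_alternating_fans[OF assms(2) root_images_subset root_images_nonempty[OF univ]])
    fix x assume "x \<in> root_images VH EH NH k"
    then show "alternating_fans EH NH (root_images VH EH NH k) x"
      using root_images_Suc_fans[of x VH EH NH k] stable by simp
  qed
  then show ?thesis using sp9_like.signified_iso_SP9 by metis
qed

end
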